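(* Let $p \in \mathbb S$ be skew and let $t \in {}^\omega 2$ with $t \neq 0$. Then $|[p] \cap ([p] + t)| \leq 2$. In particular, $p$ and $p + t$ are incompatible in $\mathbb S$.
   Context: ${}^\omega 2$ is the Cantor space with bitwise addition modulo $2$; $0$ is the constant zero sequence. $\mathbb S$ is the set of perfect subtrees of ${}^{<\omega}2$, ordered by inclusion; $[p]$ is the set of branches of $p$; $p,q\in\mathbb S$ are compatible if some $r\in\mathbb S$ satisfies $r\subseteq p$ and $r\subseteq q$. For $p\in\mathbb S$ and $t\in{}^\omega 2$, $p+t=\{\sigma+t\restriction|\sigma| : \sigma\in p\}$. A node $\sigma\in p$ is splitting if both $\sigma^\frown 0,\sigma^\frown 1\in p$. A tree $p\in\mathbb S$ is skew if for every $n\in\omega$ there is at most one splitting node of $p$ of length $n$. *)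

theory Defs
  imports Main
begin

text \<open>Cantor space: elements of ${}^\omega 2$ are functions nat => bool (True = 1, False = 0);
finite binary sequences ${}^{<\omega}2$ are bool lists. Bitwise addition modulo 2 is xor.\<close>

type_synonym cantor = "nat \<Rightarrow> bool"
type_synonym node = "bool list"

definition restr :: "cantor \<Rightarrow> nat \<Rightarrow> node" where
  "restr x n = map x [0..<n]"

definition cadd :: "cantor \<Rightarrow> cantor \<Rightarrow> cantor" where
  "cadd x t = (\<lambda>i. x i \<noteq> t i)"

definition zero_seq :: cantor where
  "zero_seq = (\<lambda>_. False)"

definition is_tree :: "node set \<Rightarrow> bool" where
  "is_tree p \<longleftrightarrow> p \<noteq> {} \<and> (\<forall>\<sigma> \<tau>. \<sigma> @ \<tau> \<in> p \<longrightarrow> \<sigma> \<in> p)"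

definition splitting :: "node set \<Rightarrow> node \<Rightarrow> bool" where
  "splitting p \<sigma> \<longleftrightarrow> \<sigma> @ [False] \<in> p \<and> \<sigma> @ [True] \<in> p"

definition perfect_tree :: "node set \<Rightarrow> bool" where
  "perfect_tree p \<longleftrightarrow> is_tree p \<and> (\<forall>\<sigma>\<in>p. \<exists>\<tau>. splitting p (\<sigma> @ \<tau>))"

definition Sacks :: "node set set" where
  "Sacks = {p. perfect_tree p}"

definition branches :: "node set \<Rightarrow> cantor set" where
  "branches p = {x. \<forall>n. restr x n \<in> p}"

definition tree_add :: "node set \<Rightarrow> cantor \<Rightarrow> node set" where
  "tree_add p t = {map2 (\<noteq>) \<sigma> (restr t (length \<sigma>)) | \<sigma>. \<sigma> \<in> p}"

definition compatible :: "node set \<Rightarrow> node set \<Rightarrow> bool" where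
  "compatible p q \<longleftrightarrow> (\<exists>r\<in>Sacks. r \<subseteq> p \<and> r \<subseteq> q)"

definition skew :: "node set \<Rightarrow> bool" where
  "skew p \<longleftrightarrow> (\<forall>n. card {\<sigma>\<in>p. splitting p \<sigma> \<and> length \<sigma> = n} \<le> 1)"

end

theory Submission
  imports Defs
begin

text \<open>Let \<open>k\<close> be the first coordinate with \<open>t k = 1\<close>. Branches \<open>x\<close> and \<open>x + t\<close> first differ at \<open>k\<close>,
so \<open>x \<restriction> k\<close> is a splitting node of \<open>p\<close>, the only one of length \<open>k\<close> by skewness; hence all
\<open>x \<in> [p] \<inter> ([p] + t)\<close> share \<open>x \<restriction> k\<close>. If two of them, \<open>x \<noteq> y\<close>, also agreed at \<open>k\<close>, their first
difference \<open>m > k\<close> would make both \<open>x \<restriction> m\<close> and \<open>(x + t) \<restriction> m\<close> splitting, so these nodes coincide,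
contradicting \<open>t k = 1\<close>. Thus \<open>x \<mapsto> x k\<close> is injective on the intersection. Similarly, a common
perfect subtree of \<open>p\<close> and \<open>p + t\<close> has a splitting node \<open>\<sigma>\<close> longer than \<open>k\<close>, and then \<open>\<sigma>\<close> and
\<open>\<sigma> + t\<close> are distinct splitting nodes of \<open>p\<close> of equal length.\<close>

lemma length_restr [simp]: "length (restr x n) = n"
  by (simp add: restr_def)

lemma nth_restr [simp]: "i < n \<Longrightarrow> restr x n ! i = x i"
  by (simp add: restr_def)

lemma restr_Suc: "restr x (Suc n) = restr x n @ [x n]"
  by (simp add: restr_def)

lemma restr_eq_iff: "restr x n = restr y n \<longleftrightarrow> (\<forall>i<n. x i = y i)"
  by (auto simp: list_eq_iff_nth_eq)

lemma restr_in_branch: "x \<in> branches p \<Longrightarrow> restr x n \<in> p"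
  by (simp add: branches_def)

lemma cadd_cadd [simp]: "cadd (cadd x t) t = x"
  by (auto simp: cadd_def)

lemma mem_translate_branches_iff:
  "x \<in> (\<lambda>y. cadd y t) ` branches p \<longleftrightarrow> cadd x t \<in> branches p"
proof
  assume "cadd x t \<in> branches p"
  then show "x \<in> (\<lambda>y. cadd y t) ` branches p"
    by (rule rev_image_eqI) simp
qed auto

lemma obtain_first_difference:
  fixes x y :: "nat \<Rightarrow> 'a"
  assumes "x \<noteq> y"
  obtains m where "\<forall>i<m. x i = y i" and "x m \<noteq> y m"
proof -
  have "\<exists>i. x i \<noteq> y i" using assms by auto
  from exists_least_iff[THEN iffD1, OF this] show ?thesis
    using that by blast
qed

lemma splitting_at_first_difference:
  assumes "x \<in> branches p" "y \<in> branches p" "\<forall>i<m. x i = y i" "x m \<noteq> y m"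
  shows "splitting p (restr x m)"
proof -
  have "restr y m = restr x m" using assms(3) by (simp add: restr_eq_iff)
  moreover have "restr x (Suc m) \<in> p" "restr y (Suc m) \<in> p"
    using assms(1,2) by (simp_all add: restr_in_branch)
  ultimately have "restr x m @ [x m] \<in> p" "restr x m @ [y m] \<in> p"
    by (simp_all add: restr_Suc)
  with assms(4) show ?thesis
    unfolding splitting_def by (cases "x m") auto
qed

lemma skew_splitting_unique:
  assumes "skew p" "\<sigma> \<in> p" "\<tau> \<in> p" "splitting p \<sigma>" "splitting p \<tau>" "length \<sigma> = length \<tau>"
  shows "\<sigma> = \<tau>"
proof -
  let ?level = "{\<rho>\<in>p. splitting p \<rho> \<and> length \<rho> = length \<sigma>}"
  have "finite ?level"
    by (rule finite_subset[OF _ finite_lists_length_eq[of UNIV "length \<sigma>"]]) auto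
  moreover have "{\<sigma>, \<tau>} \<subseteq> ?level" using assms by auto
  ultimately have "card {\<sigma>, \<tau>} \<le> card ?level" by (rule card_mono)
  also have "card ?level \<le> 1" using assms(1) by (simp add: skew_def)
  finally show ?thesis by (cases "\<sigma> = \<tau>") auto
qed

lemma skew_translate_branches_inj_on:
  assumes "skew p" and tk: "t k" and below_k: "\<forall>i<k. \<not> t i"
  shows "inj_on (\<lambda>x. x k) (branches p \<inter> (\<lambda>x. cadd x t) ` branches p)"
proof (rule inj_onI, rule ccontr)
  fix x y
  assume "x \<in> branches p \<inter> (\<lambda>x. cadd x t) ` branches p"
     and "y \<in> branches p \<inter> (\<lambda>x. cadd x t) ` branches p"
     and xy_k: "x k = y k" and "x \<noteq> y"
  then have x: "x \<in> branches p" "cadd x t \<in> branches p"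
        and y: "y \<in> branches p" "cadd y t \<in> branches p"
    by (simp_all add: mem_translate_branches_iff)
  have "splitting p (restr z k)" if "z \<in> branches p" "cadd z t \<in> branches p" for z
    using splitting_at_first_difference[OF that] below_k tk by (simp add: cadd_def)
  then have "restr x k = restr y k"
    using skew_splitting_unique[OF \<open>skew p\<close>] x y by (simp add: restr_in_branch)
  with xy_k have agree_upto_k: "\<forall>i\<le>k. x i = y i"
    by (auto simp: restr_eq_iff le_less)
  obtain m where below_m: "\<forall>i<m. x i = y i" and "x m \<noteq> y m"
    using obtain_first_difference[OF \<open>x \<noteq> y\<close>] by blast
  with agree_upto_k have "k < m" by (meson not_less)
  have "splitting p (restr x m)"
    using splitting_at_first_difference[OF x(1) y(1) below_m \<open>x m \<noteq> y m\<close>] .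
  moreover have "splitting p (restr (cadd x t) m)"
    using splitting_at_first_difference[OF x(2) y(2)] below_m \<open>x m \<noteq> y m\<close>
    by (simp add: cadd_def)
  ultimately have "restr x m = restr (cadd x t) m"
    using skew_splitting_unique[OF \<open>skew p\<close>] x by (simp add: restr_in_branch)
  with \<open>k < m\<close> tk show False
    by (auto simp: restr_eq_iff cadd_def)
qed

definition node_add :: "node \<Rightarrow> cantor \<Rightarrow> node" where
  "node_add \<sigma> t = map2 (\<noteq>) \<sigma> (restr t (length \<sigma>))"

lemma length_node_add [simp]: "length (node_add \<sigma> t) = length \<sigma>"
  by (simp add: node_add_def)

lemma nth_node_add [simp]: "i < length \<sigma> \<Longrightarrow> node_add \<sigma> t ! i = (\<sigma> ! i \<noteq> t i)"
  by (simp add: node_add_def)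

lemma node_add_node_add [simp]: "node_add (node_add \<sigma> t) t = \<sigma>"
  by (rule nth_equalityI) auto

lemma node_add_snoc: "node_add (\<sigma> @ [b]) t = node_add \<sigma> t @ [b \<noteq> t (length \<sigma>)]"
  by (rule nth_equalityI) (auto simp: nth_append less_Suc_eq)

lemma node_add_mem_of_mem_tree_add: "\<sigma> \<in> tree_add p t \<Longrightarrow> node_add \<sigma> t \<in> p"
  unfolding tree_add_def node_add_def[symmetric] by auto

lemma splitting_node_add_of_splitting_tree_add:
  assumes "splitting (tree_add p t) \<sigma>"
  shows "splitting p (node_add \<sigma> t)"
proof -
  have "node_add \<sigma> t @ [b \<noteq> t (length \<sigma>)] \<in> p" for b
    using assms node_add_mem_of_mem_tree_add[of "\<sigma> @ [b]" p t]
    by (cases b) (auto simp: splitting_def node_add_snoc)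
  from this[of False] this[of True] show ?thesis
    unfolding splitting_def by (cases "t (length \<sigma>)") auto
qed

lemma splitting_mem: "is_tree p \<Longrightarrow> splitting p \<sigma> \<Longrightarrow> \<sigma> \<in> p"
  unfolding is_tree_def splitting_def by blast

lemma splitting_mono: "p \<subseteq> q \<Longrightarrow> splitting p \<sigma> \<Longrightarrow> splitting q \<sigma>"
  unfolding splitting_def by blast

lemma perfect_tree_long_splitting:
  assumes "perfect_tree r"
  obtains \<sigma> where "splitting r \<sigma>" and "n \<le> length \<sigma>"
proof -
  have "\<exists>\<sigma>. splitting r \<sigma> \<and> n \<le> length \<sigma>"
  proof (induction n)
    case 0
    from assms obtain \<sigma> where "\<sigma> \<in> r"
      unfolding perfect_tree_def is_tree_def by blast
    with assms show ?case
      unfolding perfect_tree_def by blast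
  next
    case (Suc n)
    then obtain \<sigma> where "splitting r \<sigma>" "n \<le> length \<sigma>" by blast
    then have "\<sigma> @ [False] \<in> r" by (simp add: splitting_def)
    with assms obtain \<tau> where "splitting r (\<sigma> @ [False] @ \<tau>)"
      unfolding perfect_tree_def by (metis append_assoc)
    with \<open>n \<le> length \<sigma>\<close> show ?case by fastforce
  qed
  with that show ?thesis by blast
qed

lemma skew_not_compatible_tree_add:
  assumes "p \<in> Sacks" "skew p" and tk: "t k"
  shows "\<not> compatible p (tree_add p t)"
proof
  assume "compatible p (tree_add p t)"
  then obtain r where "perfect_tree r" "r \<subseteq> p" "r \<subseteq> tree_add p t"
    unfolding compatible_def Sacks_def by blast
  obtain \<sigma> where "splitting r \<sigma>" and long: "Suc k \<le> length \<sigma>"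
    using perfect_tree_long_splitting[OF \<open>perfect_tree r\<close>] by blast
  have tree_p: "is_tree p"
    using assms(1) by (simp add: Sacks_def perfect_tree_def)
  have "splitting p \<sigma>"
    using \<open>r \<subseteq> p\<close> \<open>splitting r \<sigma>\<close> by (rule splitting_mono)
  moreover have "splitting p (node_add \<sigma> t)"
    using \<open>splitting r \<sigma>\<close> \<open>r \<subseteq> tree_add p t\<close>
    by (blast intro: splitting_node_add_of_splitting_tree_add splitting_mono)
  ultimately have "\<sigma> = node_add \<sigma> t"
    using skew_splitting_unique[OF \<open>skew p\<close>] splitting_mem[OF tree_p] by simp
  then have "\<sigma> ! k = node_add \<sigma> t ! k" by simp
  with long tk show False by simp
qed

theorem lemma2p6:
  assumes "p \<in> Sacks" and "skew p" and "t \<noteq> zero_seq"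
  shows "finite (branches p \<inter> (\<lambda>x. cadd x t) ` branches p)
         \<and> card (branches p \<inter> (\<lambda>x. cadd x t) ` branches p) \<le> 2
         \<and> \<not> compatible p (tree_add p t)"
proof -
  let ?S = "branches p \<inter> (\<lambda>x. cadd x t) ` branches p"
  obtain k where tk: "t k" and below_k: "\<forall>i<k. \<not> t i"
    using obtain_first_difference[OF \<open>t \<noteq> zero_seq\<close>] by (auto simp: zero_seq_def)
  have inj: "inj_on (\<lambda>x. x k) ?S"
    using skew_translate_branches_inj_on[OF \<open>skew p\<close> tk below_k] .
  have "finite ((\<lambda>x. x k) ` ?S)" by simp
  then have finite_S: "finite ?S" using inj by (rule finite_imageD)
  have "card ?S \<le> card (UNIV :: bool set)"
    using inj by (rule card_inj_on_le) simp_all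
  then have card_S: "card ?S \<le> 2" by simp
  show ?thesis
    using finite_S card_S skew_not_compatible_tree_add[of p t k, OF assms(1,2) tk] by blast
qed

end
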